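(* Let $p, q \in \mathbb{R}$ with $q \le p$. Then $$\mathscr{E}_p(v) - \mathscr{E}_q(v) \le \frac{p-q}{8} (\max v - \min v)^2$$ for every $n \in \mathbb{N}$ and every $v \in \mathbb{R}^n$. Moreover, the constant $\frac{p-q}{8}$ is sharp: if $C \in \mathbb{R}$ is such that $\mathscr{E}_p(v) - \mathscr{E}_q(v) \le C(\max v - \min v)^2$ for all $n\in\mathbb{N}$ and all $v \in \mathbb{R}^n$, then $C \ge \frac{p-q}{8}$.
   Context: For $v = (v_1,\dots,v_n) \in \mathbb{R}^n$, the exponential mean of order $p \in \mathbb{R}$ is $\mathscr{E}_p(v) = \frac{1}{p}\ln\big(\frac{e^{p v_1} + \cdots + e^{p v_n}}{n}\big)$ for $p \neq 0$ and $\mathscr{E}_0(v) = \frac{v_1 + \cdots + v_n}{n}$. Here $\max v$ and $\min v$ denote the largest and smallest entry of $v$. *)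

theory Defs
  imports Complex_Main
begin

definition expmean :: "real \<Rightarrow> nat \<Rightarrow> (nat \<Rightarrow> real) \<Rightarrow> real" where
  "expmean p n v =
     (if p = 0 then (\<Sum>i<n. v i) / real n
      else ln ((\<Sum>i<n. exp (p * v i)) / real n) / p)"

end

theory Submission
  imports Defs "HOL-Probability.Hoeffding" "HOL-Real_Asymp.Real_Asymp"
begin

(* Let G t = ln (\<Sum>i<n. exp (t * v i)) and Z = (max v - min v)^2 / 8. Then expmean t n v is the
   slope (G t - G 0) / t of the chord of G from 0, and the mean of v, i.e. G'(0), at t = 0.
   Hoeffding's lemma for the Gibbs weights exp (s * v i) / (\<Sum>j<n. exp (s * v j)) says
   G (s + l) \<le> G s + l * G' s + l^2 * Z, i.e. G t - Z * t^2 lies below all its tangents and is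
   therefore concave. Chord slopes of a concave function from 0 decrease, so
   expmean p n v - Z * p \<le> expmean q n v - Z * q.
   For sharpness take v = (x, -x): expmean t 2 v = ln (cosh (t * x)) / t = t * x^2 / 2 + o(x^2),
   while (max v - min v)^2 = 4 * x^2. *)

lemma convex_on_exp_mult: "convex_on UNIV (\<lambda>x. exp (l * x))" for l :: real
proof (rule convex_on_realI[where f' = "\<lambda>x. l * exp (l * x)"])
  show "l * exp (l * x) \<le> l * exp (l * y)" if "x \<le> y" for x y :: real
    using that by (cases "l \<ge> 0") (auto intro: mult_left_mono mult_left_mono_neg)
qed (auto intro!: derivative_eq_intros)

lemma Hoeffdings_lemma_two_point:
  fixes \<theta> h :: real
  assumes "0 \<le> \<theta>" "\<theta> \<le> 1"
  shows "ln (1 + \<theta> * (exp h - 1)) \<le> \<theta> * h + h\<^sup>2 / 8"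
proof (cases "h \<ge> 0")
  case True
  with Hoeffdings_lemma_aux[OF True assms(1)] show ?thesis by (simp add: field_simps)
next
  case False
  then have "- h \<ge> 0" "1 - \<theta> \<ge> 0" using assms by simp_all
  note mirrored = Hoeffdings_lemma_aux[OF this]
  have pos: "1 + (1 - \<theta>) * (exp (- h) - 1) > 0"
    using \<open>- h \<ge> 0\<close> \<open>1 - \<theta> \<ge> 0\<close> by (intro add_pos_nonneg mult_nonneg_nonneg) auto
  have "1 + \<theta> * (exp h - 1) = exp h * (1 + (1 - \<theta>) * (exp (- h) - 1))"
    by (simp add: exp_minus field_simps)
  then have "ln (1 + \<theta> * (exp h - 1)) = h + ln (1 + (1 - \<theta>) * (exp (- h) - 1))"
    using pos by (simp add: ln_mult)
  with mirrored show ?thesis by (simp add: algebra_simps)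
qed

lemma Hoeffdings_lemma_weighted_sum:
  fixes w x :: "'i \<Rightarrow> real" and a b l :: real
  assumes "finite I" and w_nonneg: "\<And>i. i \<in> I \<Longrightarrow> w i \<ge> 0" and w_sum: "sum w I = 1"
    and x_range: "\<And>i. i \<in> I \<Longrightarrow> x i \<in> {a..b}"
  shows "ln (\<Sum>i\<in>I. w i * exp (l * x i)) \<le> l * (\<Sum>i\<in>I. w i * x i) + l\<^sup>2 * (b - a)\<^sup>2 / 8"
proof -
  define \<mu> where "\<mu> = (\<Sum>i\<in>I. w i * x i)"
  define \<theta> where "\<theta> = (\<mu> - a) / (b - a)"
  obtain j where j: "j \<in> I" "w j > 0"
    using w_sum w_nonneg by (smt (verit) sum_nonpos)
  have "(\<Sum>i\<in>I. w i * a) \<le> \<mu>" "\<mu> \<le> (\<Sum>i\<in>I. w i * b)"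
    unfolding \<mu>_def using w_nonneg x_range by (auto intro!: sum_mono mult_left_mono)
  then have "a \<le> \<mu>" "\<mu> \<le> b" by (simp_all add: sum_distrib_right[symmetric] w_sum)
  then have \<theta>: "0 \<le> \<theta>" "\<theta> \<le> 1" "\<theta> * (b - a) = \<mu> - a"
    by (auto simp: \<theta>_def divide_le_eq_1)
  have weighted_mean_affine: "(\<Sum>i\<in>I. w i * (c + d * (x i - a))) = c + d * (\<mu> - a)" for c d
  proof -
    have "(\<Sum>i\<in>I. w i * (c + d * (x i - a))) = (\<Sum>i\<in>I. (c - d * a) * w i + d * (w i * x i))"
      by (intro sum.cong) (auto simp: algebra_simps)
    then show ?thesis
      by (simp add: sum.distrib sum_distrib_left[symmetric] w_sum right_diff_distrib \<mu>_def)
  qed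
  have chord: "exp (l * x i) \<le> exp (l * a) + (exp (l * b) - exp (l * a)) / (b - a) * (x i - a)"
    if "i \<in> I" for i
    using convex_onD_Icc'[OF convex_on_subset[OF convex_on_exp_mult[of l]] x_range[OF that]] by simp
  have "(\<Sum>i\<in>I. w i * exp (l * x i))
      \<le> (\<Sum>i\<in>I. w i * (exp (l * a) + (exp (l * b) - exp (l * a)) / (b - a) * (x i - a)))"
    using chord w_nonneg by (intro sum_mono mult_left_mono) auto
  also have "\<dots> = exp (l * a) + (exp (l * b) - exp (l * a)) / (b - a) * (\<mu> - a)"
    by (rule weighted_mean_affine)
  also have "\<dots> = exp (l * a) + \<theta> * (exp (l * b) - exp (l * a))"
    by (simp add: \<theta>_def)
  also have "\<dots> = exp (l * a) * (1 + \<theta> * (exp (l * (b - a)) - 1))"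
    by (simp add: exp_diff right_diff_distrib field_simps)
  finally have sum_le: "(\<Sum>i\<in>I. w i * exp (l * x i)) \<le> \<dots>" .
  have sum_pos: "(\<Sum>i\<in>I. w i * exp (l * x i)) > 0"
    using j w_nonneg by (intro sum_pos2[OF \<open>finite I\<close> j(1)]) auto
  then have "ln (\<Sum>i\<in>I. w i * exp (l * x i))
      \<le> ln (exp (l * a) * (1 + \<theta> * (exp (l * (b - a)) - 1)))"
    using sum_le by (intro ln_mono) auto
  also have "\<dots> = l * a + ln (1 + \<theta> * (exp (l * (b - a)) - 1))"
    using sum_le sum_pos by (subst ln_mult) (auto simp: zero_less_mult_iff)
  also have "\<dots> \<le> l * a + (\<theta> * (l * (b - a)) + (l * (b - a))\<^sup>2 / 8)"
    using Hoeffdings_lemma_two_point[OF \<theta>(1,2)] by simp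
  also have "\<dots> = l * \<mu> + l\<^sup>2 * (b - a)\<^sup>2 / 8"
    using \<theta>(3) by (simp only: mult.left_commute[of \<theta>] power_mult_distrib) (simp add: right_diff_distrib)
  finally show ?thesis by (simp add: \<mu>_def)
qed

lemma ln_sum_exp_increment_le:
  fixes v :: "'i \<Rightarrow> real" and s l :: real
  assumes "finite I" "I \<noteq> {}"
  shows "ln (\<Sum>i\<in>I. exp ((s + l) * v i))
     \<le> ln (\<Sum>i\<in>I. exp (s * v i)) + l * (\<Sum>i\<in>I. exp (s * v i) * v i) / (\<Sum>i\<in>I. exp (s * v i))
       + l\<^sup>2 * (Max (v ` I) - Min (v ` I))\<^sup>2 / 8"
proof -
  define A where "A = (\<Sum>i\<in>I. exp (s * v i))"
  define w where "w i = exp (s * v i) / A" for i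
  have A_pos: "A > 0" unfolding A_def using assms by (intro sum_pos) auto
  have "ln (\<Sum>i\<in>I. w i * exp (l * v i))
      \<le> l * (\<Sum>i\<in>I. w i * v i) + l\<^sup>2 * (Max (v ` I) - Min (v ` I))\<^sup>2 / 8"
  proof (rule Hoeffdings_lemma_weighted_sum)
    show "sum w I = 1" using A_pos by (simp add: w_def A_def sum_divide_distrib[symmetric])
  qed (use assms A_pos in \<open>auto simp: w_def\<close>)
  moreover have "(\<Sum>i\<in>I. w i * exp (l * v i)) = (\<Sum>i\<in>I. exp ((s + l) * v i)) / A"
    by (simp add: w_def sum_divide_distrib distrib_right exp_add)
  moreover have "(\<Sum>i\<in>I. w i * v i) = (\<Sum>i\<in>I. exp (s * v i) * v i) / A"
    by (simp add: w_def sum_divide_distrib)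
  moreover have "(\<Sum>i\<in>I. exp ((s + l) * v i)) > 0" using assms by (intro sum_pos) auto
  ultimately show ?thesis using A_pos by (simp add: ln_div A_def)
qed

(* d stands for the derivative K'(0), the limit of the chord slopes at t = 0. *)
definition slope_from_zero :: "(real \<Rightarrow> real) \<Rightarrow> real \<Rightarrow> real \<Rightarrow> real" where
  "slope_from_zero K d t = (if t = 0 then d else (K t - K 0) / t)"

lemma slope_from_zero_antimono:
  fixes K g :: "real \<Rightarrow> real"
  assumes supergradient: "\<And>x y. K y \<le> K x + (y - x) * g x" and "q \<le> p"
  shows "slope_from_zero K (g 0) p \<le> slope_from_zero K (g 0) q"
proof -
  consider "q \<le> 0" "0 \<le> p" | "0 < q" | "p < 0" using \<open>q \<le> p\<close> by linarith
  then show ?thesis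
  proof cases
    case 1
    have "slope_from_zero K (g 0) p \<le> g 0"
      using supergradient[where x = 0 and y = p] 1
      by (auto simp: slope_from_zero_def pos_divide_le_eq mult.commute)
    also have "g 0 \<le> slope_from_zero K (g 0) q"
      using supergradient[where x = 0 and y = q] 1
      by (auto simp: slope_from_zero_def neg_le_divide_eq mult.commute)
    finally show ?thesis .
  next
    case 2
    have "q * (K p - K q) \<le> q * ((p - q) * g q)"
      and "(p - q) * (K 0 - K q) \<le> (p - q) * (- q * g q)"
      using supergradient[where x = q and y = p] supergradient[where x = q and y = 0] 2 \<open>q \<le> p\<close>
      by (intro mult_left_mono; simp)+
    then have "q * (K p - K 0) \<le> p * (K q - K 0)" by (simp add: algebra_simps)
    then show ?thesis
      using 2 \<open>q \<le> p\<close> by (simp add: slope_from_zero_def divide_simps mult.commute)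
  next
    case 3
    have "- p * (K q - K p) \<le> - p * ((q - p) * g p)"
      and "(p - q) * (K 0 - K p) \<le> (p - q) * (- p * g p)"
      using supergradient[where x = p and y = q] supergradient[where x = p and y = 0] 3 \<open>q \<le> p\<close>
      by (intro mult_left_mono; simp)+
    then have "q * (K p - K 0) \<le> p * (K q - K 0)" by (simp add: algebra_simps)
    then show ?thesis
      using 3 \<open>q \<le> p\<close> by (simp add: slope_from_zero_def divide_simps mult.commute)
  qed
qed

lemma expmean_eq_slope_from_zero:
  assumes "n \<ge> 1"
  shows "expmean t n v = slope_from_zero (\<lambda>t. ln (\<Sum>i<n. exp (t * v i))) ((\<Sum>i<n. v i) / n) t"
proof -
  have "(\<Sum>i<n. exp (t * v i)) > 0" using assms by (intro sum_pos) (auto simp: lessThan_empty_iff)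
  then show ?thesis using assms by (simp add: expmean_def slope_from_zero_def ln_div)
qed

lemma expmean_diff_le:
  fixes p q :: real and v :: "nat \<Rightarrow> real"
  assumes "q \<le> p" "n \<ge> 1"
  shows "expmean p n v - expmean q n v \<le> (p - q) / 8 * (Max (v ` {..<n}) - Min (v ` {..<n}))\<^sup>2"
proof -
  define Z where "Z = (Max (v ` {..<n}) - Min (v ` {..<n}))\<^sup>2 / 8"
  define G where "G t = ln (\<Sum>i<n. exp (t * v i))" for t
  define \<mu> where "\<mu> s = (\<Sum>i<n. exp (s * v i) * v i) / (\<Sum>i<n. exp (s * v i))" for s
  define K where "K t = G t - Z * t\<^sup>2" for t
  have "{..<n} \<noteq> {}" using \<open>n \<ge> 1\<close> by (simp add: lessThan_empty_iff)
  have G_step: "G y \<le> G x + (y - x) * \<mu> x + (y - x)\<^sup>2 * Z" for x y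
    using ln_sum_exp_increment_le[OF finite_lessThan \<open>{..<n} \<noteq> {}\<close>, of x "y - x" v]
    by (simp add: G_def \<mu>_def Z_def)
  have "K y \<le> K x + (y - x) * (\<mu> x - 2 * Z * x)" for x y
    using G_step[where x = x and y = y] by (simp add: K_def power2_eq_square algebra_simps)
  from slope_from_zero_antimono[where g = "\<lambda>x. \<mu> x - 2 * Z * x", OF this \<open>q \<le> p\<close>]
  have "slope_from_zero K (\<mu> 0) p \<le> slope_from_zero K (\<mu> 0) q" by simp
  moreover have "slope_from_zero K (\<mu> 0) t = expmean t n v - Z * t" for t
    using expmean_eq_slope_from_zero[OF \<open>n \<ge> 1\<close>, of t v]
    by (simp add: slope_from_zero_def K_def G_def \<mu>_def power2_eq_square field_simps)
  ultimately show ?thesis by (simp add: Z_def algebra_simps)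
qed

lemma ln_cosh_over_square_tendsto:
  "((\<lambda>y::real. ln ((exp y + exp (- y)) / 2) / y\<^sup>2) \<longlongrightarrow> 1 / 2) (at 0)"
  by real_asymp

lemma expmean_symmetric_pair_over_square_tendsto:
  "((\<lambda>x. expmean t 2 (\<lambda>i. if i = 0 then x else - x) / x\<^sup>2) \<longlongrightarrow> t / 2) (at 0)"
proof (cases "t = 0")
  case True
  then show ?thesis by (simp add: expmean_def eval_nat_numeral)
next
  case False
  have "filterlim (\<lambda>x. t * x) (at 0) (at 0)"
    using False by (intro filterlim_atI) (auto intro!: tendsto_eq_intros eventually_at_filter[THEN iffD2])
  from filterlim_compose[OF ln_cosh_over_square_tendsto this]
  have "((\<lambda>x. ln ((exp (t * x) + exp (- (t * x))) / 2) / (t * x)\<^sup>2) \<longlongrightarrow> 1 / 2) (at 0)" .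
  from tendsto_mult_left[OF this, of t]
  have "((\<lambda>x. t * (ln ((exp (t * x) + exp (- (t * x))) / 2) / (t * x)\<^sup>2)) \<longlongrightarrow> t / 2) (at 0)"
    by simp
  then show ?thesis
  proof (rule Lim_transform_eventually)
    show "\<forall>\<^sub>F x in at 0. t * (ln ((exp (t * x) + exp (- (t * x))) / 2) / (t * x)\<^sup>2)
        = expmean t 2 (\<lambda>i. if i = 0 then x else - x) / x\<^sup>2"
      using False by (auto simp: eventually_at_filter expmean_def eval_nat_numeral power2_eq_square)
  qed
qed

lemma expmean_diff_constant_ge:
  fixes p q C :: real
  assumes bound: "\<forall>(n::nat) (v::nat \<Rightarrow> real). n \<ge> 1 \<longrightarrow>
    expmean p n v - expmean q n v \<le> C * (Max (v ` {..<n}) - Min (v ` {..<n}))\<^sup>2"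
  shows "(p - q) / 8 \<le> C"
proof -
  define pair where "pair x = (\<lambda>i::nat. if i = 0 then x else - x)" for x :: real
  have quotient_le: "(expmean p 2 (pair x) - expmean q 2 (pair x)) / x\<^sup>2 \<le> 4 * C" if "x > 0" for x
  proof -
    have "pair x ` {..<2} = {x, - x}" by (auto simp: pair_def lessThan_nat_numeral)
    then have "expmean p 2 (pair x) - expmean q 2 (pair x) \<le> C * (2 * x)\<^sup>2"
      using bound[rule_format, of 2 "pair x"] that by simp
    then show ?thesis using that by (simp add: divide_le_eq power_mult_distrib)
  qed
  have "((\<lambda>x. (expmean p 2 (pair x) - expmean q 2 (pair x)) / x\<^sup>2) \<longlongrightarrow> p / 2 - q / 2) (at_right 0)"
    unfolding pair_def diff_divide_distrib
    by (intro tendsto_diff tendsto_mono[OF at_le expmean_symmetric_pair_over_square_tendsto]) auto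
  moreover have "\<forall>\<^sub>F x in at_right 0. (expmean p 2 (pair x) - expmean q 2 (pair x)) / x\<^sup>2 \<le> 4 * C"
    using eventually_at_right_less[of "0::real"] by eventually_elim (rule quotient_le)
  ultimately have "p / 2 - q / 2 \<le> 4 * C"
    by (rule tendsto_upperbound) simp
  then show ?thesis by simp
qed

theorem mainTheorem5:
  fixes p q :: real
  assumes "q \<le> p"
  shows "(\<forall>(n::nat) (v::nat \<Rightarrow> real). n \<ge> 1 \<longrightarrow>
            expmean p n v - expmean q n v
              \<le> (p - q) / 8 * (Max (v ` {..<n}) - Min (v ` {..<n}))^2)
       \<and> (\<forall>C::real. (\<forall>(n::nat) (v::nat \<Rightarrow> real). n \<ge> 1 \<longrightarrow>
            expmean p n v - expmean q n v
              \<le> C * (Max (v ` {..<n}) - Min (v ` {..<n}))^2)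
            \<longrightarrow> C \<ge> (p - q) / 8)"
proof (intro conjI allI impI)
  fix n :: nat and v :: "nat \<Rightarrow> real"
  assume "n \<ge> 1"
  with assms show "expmean p n v - expmean q n v
      \<le> (p - q) / 8 * (Max (v ` {..<n}) - Min (v ` {..<n}))^2"
    by (rule expmean_diff_le)
next
  fix C :: real
  assume "\<forall>(n::nat) (v::nat \<Rightarrow> real). n \<ge> 1 \<longrightarrow>
            expmean p n v - expmean q n v \<le> C * (Max (v ` {..<n}) - Min (v ` {..<n}))^2"
  then show "C \<ge> (p - q) / 8"
    by (rule expmean_diff_constant_ge)
qed

end
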